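(* Let $G=(V,E)$ be a graph with maximum degree $\Delta$ and let $W\subseteq V$ be such that the induced subgraph $\langle W\rangle$ is connected. Then for every equivalence class $\varphi$ of $\mathfrak d_{|S_v}(W)^*$ and every vertex $x\in W$ there is an edge $(x,y)\in\varphi$ with $(x,y)\in E\big(\bigcup_{v\in W}S_v\big)$. Moreover, $\mathfrak d_{|S_v}(W)^*$ has at most $\Delta$ equivalence classes.
   Context: All graphs are finite, simple and undirected. For a graph $G=(V,E)$ and $v\in V$, $E_v$ denotes the set of edges incident to $v$. For two distinct adjacent edges $e=(v,u)$, $f=(v,w)$, a square spanned by $e$ and $f$ is a $4$-cycle $v,u,x,w,v$ with $x\notin\{v,u,w\}$; it is chordless if neither $(u,w)$ nor $(v,x)$ is an edge of $G$. In a chordless square $v,u,x,w$, $(x,w)$ is the opposite edge of $(v,u)$ and $(x,u)$ is the opposite edge of $(v,w)$ (and vice versa). The relation $\delta(G)\subseteq E\times E$: $(e,f)\in\delta(G)$ iff (i) $e,f$ are distinct adjacent edges and it is not the case that $e$ and $f$ span exactly one square and that square is chordless; or (ii) $e,f$ are opposite edges of a chordless square; or (iii) $e=f$. For a relation $R$, $R^*$ is its transitive closure (finest equivalence relation containing $R$). Define $\mathfrak d_v=((E_v\times E)\cup(E\times E_v))\cap\delta(G)$ and $\mathfrak d_v^*$ the finest equivalence relation on $E$ containing $\mathfrak d_v$. Let $F_v\subseteq E\setminus E_v$ be the set of edges that are the edges not incident to $v$ of some chordless square spanned by two edges $e,e'\in E_v$ with $(e,e')\notin\mathfrak d_v^*$.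 The partial star product $S_v$ is the subgraph of $G$ with edge set $E_v\cup F_v$ and vertex set the endpoints of these edges. Define $\mathfrak d_{|S_v}=\{(e,f)\in\mathfrak d_v^*: e,f\in E(S_v)\}$ (an equivalence relation on $E(S_v)$), $\mathfrak d_{|S_v}(W)=\bigcup_{v\in W}\mathfrak d_{|S_v}$, and $\mathfrak d_{|S_v}(W)^*$ its transitive closure, an equivalence relation on $\bigcup_{v\in W}E(S_v)$. *)

theory Defs
  imports Main
begin

definition simple_graph :: "'a set \<Rightarrow> 'a set set \<Rightarrow> bool" where
  "simple_graph V E \<longleftrightarrow> finite V \<and> (\<forall>e\<in>E. \<exists>u v. e = {u, v} \<and> u \<noteq> v \<and> u \<in> V \<and> v \<in> V)"

definition inc_edges :: "'a set set \<Rightarrow> 'a \<Rightarrow> 'a set set" where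
  "inc_edges E v = {e \<in> E. v \<in> e}"

definition degree :: "'a set set \<Rightarrow> 'a \<Rightarrow> nat" where
  "degree E v = card (inc_edges E v)"

definition max_degree :: "'a set \<Rightarrow> 'a set set \<Rightarrow> nat" where
  "max_degree V E = (if V = {} then 0 else Max (degree E ` V))"

definition induced_connected :: "'a set set \<Rightarrow> 'a set \<Rightarrow> bool" where
  "induced_connected E W \<longleftrightarrow>
     (\<forall>a\<in>W. \<forall>b\<in>W. (a, b) \<in> {(x, y). x \<in> W \<and> y \<in> W \<and> {x, y} \<in> E}\<^sup>*)"

definition adj_edges :: "'a set set \<Rightarrow> 'a set \<Rightarrow> 'a set \<Rightarrow> bool" where
  "adj_edges E e f \<longleftrightarrow> e \<in> E \<and> f \<in> E \<and> e \<noteq> f \<and> e \<inter> f \<noteq> {}"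

definition sq_corners :: "'a set set \<Rightarrow> 'a \<Rightarrow> 'a \<Rightarrow> 'a \<Rightarrow> 'a set" where
  "sq_corners E v u w = {x. x \<notin> {v, u, w} \<and> {u, x} \<in> E \<and> {x, w} \<in> E}"

definition unique_chordless_square :: "'a set set \<Rightarrow> 'a set \<Rightarrow> 'a set \<Rightarrow> bool" where
  "unique_chordless_square E e f \<longleftrightarrow>
     (\<exists>v u w x. e = {v, u} \<and> f = {v, w} \<and> u \<noteq> v \<and> w \<noteq> v \<and> u \<noteq> w \<and>
        sq_corners E v u w = {x} \<and> {u, w} \<notin> E \<and> {v, x} \<notin> E)"

definition opposite_edges :: "'a set set \<Rightarrow> 'a set \<Rightarrow> 'a set \<Rightarrow> bool" where
  "opposite_edges E e f \<longleftrightarrow>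
     (\<exists>a b c d. distinct [a, b, c, d] \<and> {a, b} \<in> E \<and> {b, c} \<in> E \<and> {c, d} \<in> E \<and> {d, a} \<in> E \<and>
        {a, c} \<notin> E \<and> {b, d} \<notin> E \<and> e = {a, b} \<and> f = {c, d})"

definition delta :: "'a set set \<Rightarrow> ('a set \<times> 'a set) set" where
  "delta E = {(e, f). e \<in> E \<and> f \<in> E \<and>
      ((adj_edges E e f \<and> \<not> unique_chordless_square E e f) \<or> opposite_edges E e f \<or> e = f)}"

(* finest equivalence relation on A containing R (for R \<subseteq> A \<times> A) *)
definition equiv_closure :: "'b set \<Rightarrow> ('b \<times> 'b) set \<Rightarrow> ('b \<times> 'b) set" where
  "equiv_closure A R = Id_on A \<union> (R \<union> R\<inverse>)\<^sup>+"

definition dv :: "'a set set \<Rightarrow> 'a \<Rightarrow> ('a set \<times> 'a set) set" where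
  "dv E v = ((inc_edges E v \<times> E) \<union> (E \<times> inc_edges E v)) \<inter> delta E"

definition dv_star :: "'a set set \<Rightarrow> 'a \<Rightarrow> ('a set \<times> 'a set) set" where
  "dv_star E v = equiv_closure E (dv E v)"

definition F_v :: "'a set set \<Rightarrow> 'a \<Rightarrow> 'a set set" where
  "F_v E v = {g. \<exists>u w x. {v, u} \<in> E \<and> {v, w} \<in> E \<and> u \<noteq> v \<and> w \<noteq> v \<and> u \<noteq> w \<and>
       x \<notin> {v, u, w} \<and> {u, x} \<in> E \<and> {x, w} \<in> E \<and> {u, w} \<notin> E \<and> {v, x} \<notin> E \<and>
       ({v, u}, {v, w}) \<notin> dv_star E v \<and> (g = {u, x} \<or> g = {x, w})}"

definition S_edges :: "'a set set \<Rightarrow> 'a \<Rightarrow> 'a set set" where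
  "S_edges E v = inc_edges E v \<union> F_v E v"

definition d_restr :: "'a set set \<Rightarrow> 'a \<Rightarrow> ('a set \<times> 'a set) set" where
  "d_restr E v = dv_star E v \<inter> (S_edges E v \<times> S_edges E v)"

definition d_W :: "'a set set \<Rightarrow> 'a set \<Rightarrow> ('a set \<times> 'a set) set" where
  "d_W E W = (\<Union>v\<in>W. d_restr E v)"

definition d_W_star :: "'a set set \<Rightarrow> 'a set \<Rightarrow> ('a set \<times> 'a set) set" where
  "d_W_star E W = (d_W E W)\<^sup>+"

end

theory Submission
  imports Defs
begin

text \<open>Each edge of \<open>S\<^sub>v\<close> not at \<open>v\<close> is opposite, in a chordless square, to an edge at \<open>v\<close>,
  so every class of \<open>d\<^sub>|\<^sub>S\<^sub>v(W)\<^sup>*\<close> containing an edge of some \<open>S\<^sub>v\<close> contains an edge at \<open>v\<close>.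
  If \<open>(x,y)\<close> and \<open>(x,z)\<close> are edges at \<open>x\<close>, either they are already \<open>d\<^sub>x\<^sup>*\<close>-related, or they span
  a unique chordless square \<open>x,y,c,z\<close> whose edge \<open>(c,z)\<close> then lies in \<open>F\<^sub>x\<close> and is opposite
  to \<open>(x,y)\<close>. Either way a class containing an edge at \<open>x\<close> contains an edge at every neighbour
  of \<open>x\<close>, and connectivity of \<open>\<langle>W\<rangle>\<close> spreads this over all of \<open>W\<close>. Hence the classes are
  determined by the edges at any single vertex of \<open>W\<close>, of which there are at most \<open>\<Delta>\<close>.\<close>

lemma simple_graph_edgeE:
  assumes "simple_graph V E" "e \<in> E"
  obtains u v where "e = {u, v}" "u \<noteq> v" "u \<in> V" "v \<in> V"
  using assms unfolding simple_graph_def by blast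

lemma simple_graph_edge_neq:
  assumes "simple_graph V E" "{x, y} \<in> E"
  shows "x \<noteq> y"
  using assms by (elim simple_graph_edgeE) (auto simp: doubleton_eq_iff)

lemma simple_graph_finite_edges:
  assumes "simple_graph V E"
  shows "finite E"
proof -
  have "E \<subseteq> Pow V"
    using assms by (auto elim: simple_graph_edgeE)
  then show ?thesis
    using assms finite_subset unfolding simple_graph_def by auto
qed

lemma degree_le_max_degree:
  assumes "simple_graph V E" "x \<in> V"
  shows "degree E x \<le> max_degree V E"
  using assms unfolding max_degree_def simple_graph_def by auto

lemma S_edge_in_edges: "g \<in> S_edges E v \<Longrightarrow> g \<in> E"
  unfolding S_edges_def inc_edges_def F_v_def by auto

lemma inc_edge_in_S_edges: "{v, u} \<in> E \<Longrightarrow> {v, u} \<in> S_edges E v"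
  unfolding S_edges_def inc_edges_def by auto

lemma dv_into_dv_star: "p \<in> dv E v \<Longrightarrow> p \<in> dv_star E v"
  unfolding dv_star_def equiv_closure_def by (simp add: r_into_trancl')

lemma dv_star_refl: "e \<in> E \<Longrightarrow> (e, e) \<in> dv_star E v"
  unfolding dv_star_def equiv_closure_def by auto

lemma sym_dv_star: "sym (dv_star E v)"
  unfolding dv_star_def equiv_closure_def
  using sym_trancl[of "dv E v \<union> (dv E v)\<inverse>"] by (auto simp: sym_def)

lemma opposite_edges_in_dv:
  assumes "distinct [v, b, c, d]" "{v, b} \<in> E" "{b, c} \<in> E" "{c, d} \<in> E" "{d, v} \<in> E"
    and "{v, c} \<notin> E" "{b, d} \<notin> E"
  shows "({v, b}, {c, d}) \<in> dv E v"
proof -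
  have "opposite_edges E {v, b} {c, d}"
    unfolding opposite_edges_def using assms by blast
  then show ?thesis
    using assms unfolding dv_def delta_def inc_edges_def by auto
qed

lemma F_v_edge_related_to_inc_edge:
  assumes "g \<in> F_v E v"
  obtains y where "{v, y} \<in> E" "({v, y}, g) \<in> dv_star E v"
proof -
  obtain u w x where sq: "{v, u} \<in> E" "{v, w} \<in> E" "u \<noteq> v" "w \<noteq> v" "u \<noteq> w"
      "x \<notin> {v, u, w}" "{u, x} \<in> E" "{x, w} \<in> E" "{u, w} \<notin> E" "{v, x} \<notin> E"
      and g: "g = {u, x} \<or> g = {x, w}"
    using assms unfolding F_v_def by blast
  show thesis
  proof (cases "g = {u, x}")
    case True
    have "({v, w}, {x, u}) \<in> dv E v"
      by (rule opposite_edges_in_dv) (use sq in \<open>auto simp: insert_commute\<close>)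
    then have "({v, w}, g) \<in> dv E v"
      using True by (simp add: insert_commute)
    then show thesis
      by (rule that[OF sq(2) dv_into_dv_star])
  next
    case False
    have "({v, u}, {x, w}) \<in> dv E v"
      by (rule opposite_edges_in_dv) (use sq in \<open>auto simp: insert_commute\<close>)
    then show thesis
      using False g by (intro that[OF sq(1) dv_into_dv_star]) auto
  qed
qed

lemma S_edge_related_to_inc_edge:
  assumes "simple_graph V E" "g \<in> S_edges E v"
  obtains y where "{v, y} \<in> S_edges E v" "(g, {v, y}) \<in> d_restr E v"
proof (cases "g \<in> inc_edges E v")
  case True
  then have "g \<in> E" "v \<in> g"
    unfolding inc_edges_def by auto
  moreover obtain a b where "g = {a, b}"
    using assms(1) \<open>g \<in> E\<close> by (rule simple_graph_edgeE)
  ultimately obtain y where y: "g = {v, y}"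
    by (metis insert_commute insertE singletonD)
  have "(g, g) \<in> d_restr E v"
    using dv_star_refl[OF \<open>g \<in> E\<close>] assms(2) unfolding d_restr_def by simp
  then show thesis
    using that[of y] assms(2) y by simp
next
  case False
  then have "g \<in> F_v E v"
    using assms(2) unfolding S_edges_def by simp
  then obtain y where y: "{v, y} \<in> E" "({v, y}, g) \<in> dv_star E v"
    by (rule F_v_edge_related_to_inc_edge)
  have "(g, {v, y}) \<in> dv_star E v"
    using y(2) sym_dv_star by (rule symD[rotated])
  then have "(g, {v, y}) \<in> d_restr E v"
    using assms(2) inc_edge_in_S_edges[OF y(1)] unfolding d_restr_def by simp
  then show thesis
    using that inc_edge_in_S_edges[OF y(1)] by simp
qed

lemma chordless_square_if_not_dv_star:
  assumes sg: "simple_graph V E" and xy: "{x, y} \<in> E" and xz: "{x, z} \<in> E" and "y \<noteq> z"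
    and unrelated: "({x, y}, {x, z}) \<notin> dv_star E x"
  obtains c where "c \<notin> {x, y, z}" "{y, c} \<in> E" "{c, z} \<in> E" "{y, z} \<notin> E" "{x, c} \<notin> E"
proof -
  have neq: "x \<noteq> y" "x \<noteq> z" "y \<noteq> z"
    using simple_graph_edge_neq[OF sg] xy xz \<open>y \<noteq> z\<close> by auto
  have "({x, y}, {x, z}) \<notin> delta E"
    using unrelated xy xz dv_into_dv_star[of "({x, y}, {x, z})" E x]
    unfolding dv_def inc_edges_def by auto
  moreover have "adj_edges E {x, y} {x, z}"
    unfolding adj_edges_def using xy xz neq by (auto simp: doubleton_eq_iff)
  ultimately have "unique_chordless_square E {x, y} {x, z}"
    using xy xz unfolding delta_def by auto
  then obtain v u w c where sq: "{x, y} = {v, u}" "{x, z} = {v, w}" "u \<noteq> w"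
      "sq_corners E v u w = {c}" "{u, w} \<notin> E" "{v, c} \<notin> E"
    unfolding unique_chordless_square_def by blast
  have "v = x" "u = y" "w = z"
    using sq(1-3) neq by (auto simp: doubleton_eq_iff)
  then show thesis
    using that sq(4-6) unfolding sq_corners_def by auto
qed

lemma inc_edge_related_to_neighbour_edge:
  assumes sg: "simple_graph V E" and xy: "{x, y} \<in> E" and xz: "{x, z} \<in> E" and "y \<noteq> z"
  obtains y' where "{z, y'} \<in> S_edges E x" "({x, y}, {z, y'}) \<in> d_restr E x"
proof (cases "({x, y}, {x, z}) \<in> dv_star E x")
  case True
  moreover have "{x, z} = {z, x}"
    by (rule insert_commute)
  ultimately show thesis
    using that[of x] inc_edge_in_S_edges[OF xy] inc_edge_in_S_edges[OF xz]
    unfolding d_restr_def by simp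
next
  case False
  then obtain c where c: "c \<notin> {x, y, z}" "{y, c} \<in> E" "{c, z} \<in> E" "{y, z} \<notin> E" "{x, c} \<notin> E"
    using chordless_square_if_not_dv_star[OF assms] by blast
  have neq: "x \<noteq> y" "x \<noteq> z"
    using simple_graph_edge_neq[OF sg] xy xz by auto
  have "{c, z} \<in> F_v E x"
    unfolding F_v_def using xy xz neq \<open>y \<noteq> z\<close> c False by blast
  then have S: "{z, c} \<in> S_edges E x"
    unfolding S_edges_def by (simp add: insert_commute)
  have "({x, y}, {c, z}) \<in> dv E x"
    by (rule opposite_edges_in_dv) (use xy xz neq \<open>y \<noteq> z\<close> c in \<open>auto simp: insert_commute\<close>)
  then have "({x, y}, {z, c}) \<in> dv_star E x"
    by (simp add: dv_into_dv_star insert_commute)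
  then show thesis
    using that[of c] S inc_edge_in_S_edges[OF xy] unfolding d_restr_def by simp
qed

lemma d_restr_into_d_W_star: "v \<in> W \<Longrightarrow> p \<in> d_restr E v \<Longrightarrow> p \<in> d_W_star E W"
  unfolding d_W_star_def d_W_def by (rule r_into_trancl') (rule UN_I)

lemma sym_d_restr: "sym (d_restr E v)"
  unfolding d_restr_def by (rule sym_Int[OF sym_dv_star]) (rule symI, simp)

lemma equiv_d_W_star: "equiv (\<Union>v\<in>W. S_edges E v) (d_W_star E W)"
proof (rule equivI)
  have "d_W E W \<subseteq> (\<Union>v\<in>W. S_edges E v) \<times> (\<Union>v\<in>W. S_edges E v)"
    unfolding d_W_def d_restr_def by blast
  then show "d_W_star E W \<subseteq> (\<Union>v\<in>W. S_edges E v) \<times> (\<Union>v\<in>W. S_edges E v)"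
    unfolding d_W_star_def by (rule trancl_subset_Sigma)
  have "(g, g) \<in> d_W_star E W" if g: "g \<in> (\<Union>v\<in>W. S_edges E v)" for g
  proof -
    obtain v where v: "v \<in> W" "g \<in> S_edges E v"
      using g by blast
    then have "(g, g) \<in> d_restr E v"
      using dv_star_refl[OF S_edge_in_edges] unfolding d_restr_def by simp
    with v(1) show ?thesis
      by (rule d_restr_into_d_W_star)
  qed
  then show "refl_on (\<Union>v\<in>W. S_edges E v) (d_W_star E W)"
    by (rule refl_onI)
  have "sym (d_W E W)"
    unfolding d_W_def by (rule sym_UNION) (simp add: sym_d_restr)
  then show "sym (d_W_star E W)"
    unfolding d_W_star_def by (rule sym_trancl)
  show "trans (d_W_star E W)"
    unfolding d_W_star_def by (rule trans_trancl)
qed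

lemma d_W_star_class_meets_every_vertex:
  assumes sg: "simple_graph V E" and conn: "induced_connected E W"
    and \<phi>: "\<phi> \<in> (\<Union>v\<in>W. S_edges E v) // d_W_star E W" and "x \<in> W"
  shows "\<exists>y. {x, y} \<in> \<phi> \<and> {x, y} \<in> (\<Union>v\<in>W. S_edges E v)"
proof -
  let ?A = "\<Union>v\<in>W. S_edges E v" and ?r = "d_W_star E W"
  obtain g where g: "g \<in> ?A" and \<phi>_eq: "\<phi> = ?r `` {g}"
    using \<phi> by (rule quotientE)
  from g obtain v where v: "v \<in> W" "g \<in> S_edges E v"
    by (rule UN_E)
  have "(v, x) \<in> {(a, b). a \<in> W \<and> b \<in> W \<and> {a, b} \<in> E}\<^sup>*"
    using conn v(1) \<open>x \<in> W\<close> unfolding induced_connected_def by simp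
  then show ?thesis
  proof (induction rule: rtrancl_induct)
    case base
    obtain y where y: "{v, y} \<in> S_edges E v" "(g, {v, y}) \<in> d_restr E v"
      using S_edge_related_to_inc_edge[OF sg v(2)] .
    have "(g, {v, y}) \<in> ?r"
      using v(1) y(2) by (rule d_restr_into_d_W_star)
    then show ?case
      using \<phi>_eq y(1) v(1) by auto
  next
    case (step a z)
    then obtain y where y: "{a, y} \<in> \<phi>" "{a, y} \<in> ?A" and a: "a \<in> W" "{a, z} \<in> E"
      by auto
    show ?case
    proof (cases "y = z")
      case True
      then show ?thesis
        using y by (auto simp: insert_commute)
    next
      case False
      have "{a, y} \<in> E"
        using y(2) by (auto dest: S_edge_in_edges)
      then obtain y' where y': "{z, y'} \<in> S_edges E a" "({a, y}, {z, y'}) \<in> d_restr E a"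
        using inc_edge_related_to_neighbour_edge[OF sg _ a(2) False] by blast
      have "(g, {a, y}) \<in> ?r"
        using y(1) \<phi>_eq by simp
      moreover have "({a, y}, {z, y'}) \<in> ?r"
        using a(1) y'(2) by (rule d_restr_into_d_W_star)
      ultimately have "(g, {z, y'}) \<in> ?r"
        unfolding d_W_star_def by (rule trancl_trans)
      then show ?thesis
        using \<phi>_eq y'(1) a(1) by auto
    qed
  qed
qed

lemma card_d_W_star_quotient_le_degree:
  assumes sg: "simple_graph V E" and conn: "induced_connected E W" and "x \<in> W"
  shows "card ((\<Union>v\<in>W. S_edges E v) // d_W_star E W) \<le> degree E x"
proof -
  let ?A = "\<Union>v\<in>W. S_edges E v" and ?r = "d_W_star E W"
  have "?A // ?r \<subseteq> (\<lambda>e. ?r `` {e}) ` inc_edges E x"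
  proof
    fix \<phi> assume \<phi>: "\<phi> \<in> ?A // ?r"
    then obtain y where y: "{x, y} \<in> \<phi>" "{x, y} \<in> ?A"
      using d_W_star_class_meets_every_vertex[OF sg conn _ \<open>x \<in> W\<close>] by blast
    obtain g where g: "\<phi> = ?r `` {g}"
      using \<phi> by (rule quotientE)
    then have "(g, {x, y}) \<in> ?r"
      using y(1) by simp
    then have "\<phi> = ?r `` {{x, y}}"
      unfolding g by (rule equiv_class_eq[OF equiv_d_W_star])
    moreover obtain v where "{x, y} \<in> S_edges E v"
      using y(2) by blast
    then have "{x, y} \<in> inc_edges E x"
      unfolding inc_edges_def by (auto dest: S_edge_in_edges)
    ultimately show "\<phi> \<in> (\<lambda>e. ?r `` {e}) ` inc_edges E x"
      by blast
  qed
  moreover have "finite (inc_edges E x)"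
    using simple_graph_finite_edges[OF sg] unfolding inc_edges_def by simp
  ultimately have "card (?A // ?r) \<le> card ((\<lambda>e. ?r `` {e}) ` inc_edges E x)"
    by (intro card_mono finite_imageI)
  also have "\<dots> \<le> degree E x"
    unfolding degree_def by (rule card_image_le) fact
  finally show ?thesis .
qed

theorem lemma3p5:
  fixes V :: "'a set" and E :: "'a set set" and W :: "'a set" and \<Delta> :: nat
  assumes "simple_graph V E"
    and "\<Delta> = max_degree V E"
    and "W \<subseteq> V"
    and "induced_connected E W"
  shows "(\<forall>\<phi> \<in> (\<Union>v\<in>W. S_edges E v) // d_W_star E W. \<forall>x\<in>W.
            \<exists>y. {x, y} \<in> \<phi> \<and> {x, y} \<in> (\<Union>v\<in>W. S_edges E v))
         \<and> card ((\<Union>v\<in>W. S_edges E v) // d_W_star E W) \<le> \<Delta>"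
proof (intro conjI)
  show "\<forall>\<phi> \<in> (\<Union>v\<in>W. S_edges E v) // d_W_star E W. \<forall>x\<in>W.
          \<exists>y. {x, y} \<in> \<phi> \<and> {x, y} \<in> (\<Union>v\<in>W. S_edges E v)"
    using d_W_star_class_meets_every_vertex[OF assms(1,4)] by blast
  show "card ((\<Union>v\<in>W. S_edges E v) // d_W_star E W) \<le> \<Delta>"
  proof (cases "W = {}")
    case True
    then show ?thesis by simp
  next
    case False
    then obtain x where "x \<in> W"
      by blast
    then have "card ((\<Union>v\<in>W. S_edges E v) // d_W_star E W) \<le> degree E x"
      by (rule card_d_W_star_quotient_le_degree[OF assms(1,4)])
    also have "\<dots> \<le> \<Delta>"
      using degree_le_max_degree[OF assms(1)] \<open>x \<in> W\<close> assms(2,3) by auto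
    finally show ?thesis .
  qed
qed

end
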